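(* Let $G$ be a graph with $\chi'(G)=\Delta(G)=4$, let $h$ be a proper $4$-edge coloring of $G$ and $f$ a proper $5$-edge coloring of $G$. Let $P$ be a connected component of $G_f(1,2)$ (a maximal path or cycle whose edges are colored $1$ or $2$ under $f$) containing an edge $xy$ with $f(xy)=2$ and $h(xy)=1$. If there is no edge $e$ on $P$ with $f(e)=h(e)=1$ at distance at most $2$ from $xy$ on $P$, then there is a proper $5$-edge coloring $f'$ of $G$, obtainable from $f$ by a sequence of interchanges, with $|M(f',1)\cap M(h,1)|>|M(f,1)\cap M(h,1)|$.
   Context: Graphs are finite and simple; $\Delta(G)$ is the maximum degree. A proper $t$-edge coloring is a map $E(G)\to\{1,\dots,t\}$ with adjacent edges receiving distinct colors; $\chi'(G)$ is the least $t$ admitting one. $M(\varphi,k)$ is the set of edges colored $k$ under $\varphi$. $G_f(a,b)$ is the subgraph induced by the edges colored $a$ or $b$ under $f$. An interchange swaps colors $a$ and $b$ on one connected component of $G_f(a,b)$. The distance between two edges $e,e'$ on a path or cycle $P$ is the number of edges between $e$ and $e'$ on $P$. *)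

theory Defs
  imports Main
begin

definition simple_graph :: "'a set \<Rightarrow> 'a set set \<Rightarrow> bool" where
  "simple_graph V E \<longleftrightarrow> finite V \<and>
     (\<forall>e\<in>E. \<exists>u v. u \<noteq> v \<and> u \<in> V \<and> v \<in> V \<and> e = {u, v})"

definition degree :: "'a set set \<Rightarrow> 'a \<Rightarrow> nat" where
  "degree E v = card {e\<in>E. v \<in> e}"

definition max_degree :: "'a set \<Rightarrow> 'a set set \<Rightarrow> nat" where
  "max_degree V E = Max (insert 0 (degree E ` V))"

definition edges_adj :: "'a set \<Rightarrow> 'a set \<Rightarrow> bool" where
  "edges_adj e e' \<longleftrightarrow> e \<noteq> e' \<and> e \<inter> e' \<noteq> {}"

definition proper_edge_coloring :: "'a set set \<Rightarrow> nat \<Rightarrow> ('a set \<Rightarrow> nat) \<Rightarrow> bool" where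
  "proper_edge_coloring E t f \<longleftrightarrow>
     (\<forall>e\<in>E. f e \<in> {1..t}) \<and>
     (\<forall>e\<in>E. \<forall>e'\<in>E. edges_adj e e' \<longrightarrow> f e \<noteq> f e')"

definition chromatic_index :: "'a set set \<Rightarrow> nat" where
  "chromatic_index E = (LEAST t. \<exists>f. proper_edge_coloring E t f)"

definition color_class :: "'a set set \<Rightarrow> ('a set \<Rightarrow> nat) \<Rightarrow> nat \<Rightarrow> 'a set set" where
  "color_class E f k = {e\<in>E. f e = k}"

definition two_color_edges :: "'a set set \<Rightarrow> ('a set \<Rightarrow> nat) \<Rightarrow> nat \<Rightarrow> nat \<Rightarrow> 'a set set" where
  "two_color_edges E f a b = {e\<in>E. f e = a \<or> f e = b}"

definition component :: "'a set set \<Rightarrow> ('a set \<Rightarrow> nat) \<Rightarrow> nat \<Rightarrow> nat \<Rightarrow> 'a set \<Rightarrow> 'a set set" where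
  "component E f a b e0 =
     {e. (\<lambda>x y. x \<in> two_color_edges E f a b \<and> y \<in> two_color_edges E f a b \<and> edges_adj x y)\<^sup>*\<^sup>* e0 e
         \<and> e \<in> two_color_edges E f a b}"

definition swap_on :: "'a set set \<Rightarrow> nat \<Rightarrow> nat \<Rightarrow> ('a set \<Rightarrow> nat) \<Rightarrow> 'a set \<Rightarrow> nat" where
  "swap_on C a b f = (\<lambda>e. if e \<in> C then (if f e = a then b else a) else f e)"

definition interchange :: "'a set set \<Rightarrow> nat \<Rightarrow> ('a set \<Rightarrow> nat) \<Rightarrow> ('a set \<Rightarrow> nat) \<Rightarrow> bool" where
  "interchange E t f f' \<longleftrightarrow>
     (\<exists>a b e0. a \<in> {1..t} \<and> b \<in> {1..t} \<and> a \<noteq> b \<and> e0 \<in> two_color_edges E f a b \<and>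
        f' = swap_on (component E f a b e0) a b f)"

(* line-graph distance within the edge set P: there is a walk e = e_0, ..., e_n = e' of
   pairwise-adjacent consecutive edges of P with n steps; the distance in the sense of the paper
   ("number of edges between") is then n - 1. *)
definition walk_steps_in :: "'a set set \<Rightarrow> nat \<Rightarrow> 'a set \<Rightarrow> 'a set \<Rightarrow> bool" where
  "walk_steps_in P n e e' \<longleftrightarrow>
     ((\<lambda>x y. x \<in> P \<and> y \<in> P \<and> edges_adj x y) ^^ n) e e'"

definition dist_le_on :: "'a set set \<Rightarrow> 'a set \<Rightarrow> 'a set \<Rightarrow> nat \<Rightarrow> bool" where
  "dist_le_on P e e' d \<longleftrightarrow> e \<in> P \<and> e' \<in> P \<and> (\<exists>n\<le>d+1. walk_steps_in P n e e')"

end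

theory Submission
  imports Defs
begin

text \<open>Walk from the end \<open>y\<close> of \<open>xy\<close> along its 1,2-chain. If the chain stops within three
  edges, that side is already closed off. Otherwise the next three edges are coloured 1, 2, 1 and,
  by hypothesis, their 1-edges are not in \<open>M(h,1)\<close>. Each of the four vertices on them has degree
  at most 4 and sees colours 1 and 2, so it misses one of 3, 4, 5. Since a Kempe chain has at most
  two ends, at most two interchanges of such free colours (which never create 1- or 2-edges) make
  one colour missing at both ends of one of the three edges, which is then recoloured out of
  \<open>{1,2}\<close>. Doing this on both sides cuts the chain of \<open>xy\<close> down to a piece none of whose 1-edges
  lies in \<open>M(h,1)\<close>, and swapping 1 and 2 on it adds \<open>xy\<close> to \<open>M(f,1) \<inter> M(h,1)\<close> without removing
  anything from it.\<close>

lemma proper_edge_coloring_eqD: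
  assumes "proper_edge_coloring E t g" "e \<in> E" "e' \<in> E" "z \<in> e" "z \<in> e'" "g e = g e'"
  shows "e = e'"
  using assms unfolding proper_edge_coloring_def edges_adj_def by blast

lemma simple_graph_finite_edges:
  assumes "simple_graph V E"
  shows "finite E"
proof -
  have "E \<subseteq> Pow V" "finite V" using assms unfolding simple_graph_def by fastforce+
  then show ?thesis by (meson finite_Pow_iff finite_subset)
qed

lemma simple_graph_card_edge: "simple_graph V E \<Longrightarrow> e \<in> E \<Longrightarrow> card e = 2"
  unfolding simple_graph_def by fastforce

lemma simple_graph_edge_at:
  assumes "simple_graph V E" "e \<in> E" "y \<in> e"
  obtains v where "e = {y, v}" "v \<noteq> y"
proof -
  obtain u w where "u \<noteq> w" "e = {u, w}" using assms(1,2) unfolding simple_graph_def by blast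
  with assms(3) that show ?thesis by (auto simp: insert_commute)
qed

lemma card_edges_at_le_max_degree:
  assumes "simple_graph V E"
  shows "card {e\<in>E. z \<in> e} \<le> max_degree V E"
proof (cases "z \<in> V")
  case True
  moreover have "finite V" using assms unfolding simple_graph_def by simp
  ultimately have "degree E z \<le> Max (insert 0 (degree E ` V))" by simp
  then show ?thesis unfolding max_degree_def degree_def .
next
  case False
  then have "{e\<in>E. z \<in> e} = {}"
    using assms unfolding simple_graph_def by fastforce
  then show ?thesis by (simp only: card.empty)
qed

subsection \<open>Kempe chains\<close>

lemma component_subset: "component E g a b e0 \<subseteq> two_color_edges E g a b"
  unfolding component_def by blast

lemma component_subset_edges: "component E g a b e0 \<subseteq> E"
  using component_subset unfolding two_color_edges_def by blast

lemma component_colour: "e \<in> component E g a b e0 \<Longrightarrow> g e = a \<or> g e = b"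
  using component_subset unfolding two_color_edges_def by blast

lemma component_self: "e0 \<in> two_color_edges E g a b \<Longrightarrow> e0 \<in> component E g a b e0"
  unfolding component_def by blast

lemma component_closed:
  assumes "e \<in> component E g a b e0" "e' \<in> two_color_edges E g a b" "edges_adj e e'"
  shows "e' \<in> component E g a b e0"
  using assms unfolding component_def by (auto intro: rtranclp.rtrancl_into_rtrancl)

lemma component_least:
  assumes "e0 \<in> S"
    and "\<And>e e'. e \<in> S \<Longrightarrow> e' \<in> two_color_edges E g a b \<Longrightarrow> edges_adj e e' \<Longrightarrow> e' \<in> S"
  shows "component E g a b e0 \<subseteq> S"
proof
  fix e assume "e \<in> component E g a b e0"
  then have "(\<lambda>x y. x \<in> two_color_edges E g a b \<and> y \<in> two_color_edges E g a b \<and> edges_adj x y)\<^sup>*\<^sup>* e0 e"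
    unfolding component_def by blast
  then show "e \<in> S"
    by (induction rule: rtranclp_induct) (use assms in auto)
qed

lemma edges_adj_sym: "edges_adj e e' \<Longrightarrow> edges_adj e' e"
  unfolding edges_adj_def by blast

lemma component_boundary_colour:
  assumes "e \<in> component E g a b e0" "e' \<in> E" "e' \<notin> component E g a b e0" "edges_adj e e'"
  shows "g e' \<noteq> a \<and> g e' \<noteq> b"
  using component_closed[OF assms(1) _ assms(4)] assms(2,3) unfolding two_color_edges_def by blast

lemma proper_swap_on_component:
  assumes P: "proper_edge_coloring E t g" and "a \<in> {1..t}" "b \<in> {1..t}"
  shows "proper_edge_coloring E t (swap_on (component E g a b e0) a b g)"
  unfolding proper_edge_coloring_def
proof (intro conjI ballI impI)
  let ?K = "component E g a b e0"
  fix e assume "e \<in> E"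
  then show "swap_on ?K a b g e \<in> {1..t}"
    using P assms unfolding proper_edge_coloring_def swap_on_def by auto
next
  let ?K = "component E g a b e0"
  fix e e' assume e: "e \<in> E" and e': "e' \<in> E" and adj: "edges_adj e e'"
  have ne: "g e \<noteq> g e'" using P e e' adj unfolding proper_edge_coloring_def by blast
  consider "e \<in> ?K" "e' \<in> ?K" | "e \<in> ?K" "e' \<notin> ?K" | "e \<notin> ?K" "e' \<in> ?K" | "e \<notin> ?K" "e' \<notin> ?K"
    by blast
  then show "swap_on ?K a b g e \<noteq> swap_on ?K a b g e'"
  proof cases
    case 1
    then show ?thesis using ne component_colour[of e E g a b e0] component_colour[of e' E g a b e0] unfolding swap_on_def by auto
  next
    case 2
    then show ?thesis using component_boundary_colour[OF _ e' _ adj] unfolding swap_on_def by auto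
  next
    case 3
    then show ?thesis
      using component_boundary_colour[OF _ e _ edges_adj_sym[OF adj]] unfolding swap_on_def by auto
  next
    case 4
    then show ?thesis using ne unfolding swap_on_def by simp
  qed
qed

lemma interchange_proper:
  "interchange E t g g' \<Longrightarrow> proper_edge_coloring E t g \<Longrightarrow> proper_edge_coloring E t g'"
  unfolding interchange_def using proper_swap_on_component by blast

lemma interchanges_proper:
  "(interchange E t)\<^sup>*\<^sup>* g g' \<Longrightarrow> proper_edge_coloring E t g \<Longrightarrow> proper_edge_coloring E t g'"
  by (induction rule: rtranclp_induct) (auto intro: interchange_proper)

definition misses :: "'a set set \<Rightarrow> ('a set \<Rightarrow> nat) \<Rightarrow> 'a \<Rightarrow> nat \<Rightarrow> bool" where
  "misses E g z c \<longleftrightarrow> (\<forall>e\<in>E. z \<in> e \<longrightarrow> g e \<noteq> c)"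

lemma misses_some_free_colour:
  assumes "finite E" and deg: "card {e\<in>E. z \<in> e} \<le> 4"
    and "e1 \<in> E" "z \<in> e1" "g e1 = 1" and "e2 \<in> E" "z \<in> e2" "g e2 = 2"
  shows "\<exists>c\<in>{3,4,5}. misses E g z c"
proof (rule ccontr)
  let ?A = "{e\<in>E. z \<in> e}"
  assume "\<not> ?thesis"
  then have "{1,2,3,4,5} \<subseteq> g ` ?A"
    using assms(3-8) unfolding misses_def by (auto simp: image_iff)
  then have "card {1,2,3,4,5::nat} \<le> card (g ` ?A)"
    using \<open>finite E\<close> by (intro card_mono) auto
  then have "5 \<le> card (g ` ?A)" by simp
  also have "\<dots> \<le> card ?A" using \<open>finite E\<close> by (intro card_image_le) simp
  finally show False using deg by simp
qed

lemma misses_swap_on_component: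
  assumes P: "proper_edge_coloring E t g" and s: "s \<in> E" "z \<in> s" "g s = c"
    and "misses E g z d"
  shows "misses E (swap_on (component E g c d s) c d g) z c"
  unfolding misses_def
proof (intro ballI impI)
  let ?K = "component E g c d s"
  fix e assume e: "e \<in> E" "z \<in> e"
  have "s \<in> ?K" using s by (intro component_self) (simp add: two_color_edges_def)
  show "swap_on ?K c d g e \<noteq> c"
  proof (cases "e \<in> ?K")
    case True
    then show ?thesis
      using component_colour[OF True] \<open>misses E g z d\<close> e unfolding swap_on_def misses_def by auto
  next
    case False
    then have "e \<noteq> s" using \<open>s \<in> ?K\<close> by blast
    then have "g e \<noteq> c" using proper_edge_coloring_eqD[OF P e(1) s(1) e(2) s(2)] s(3) by auto
    then show ?thesis using False unfolding swap_on_def by simp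
  qed
qed

lemma misses_swap_on_untouched:
  "\<forall>e\<in>K. z \<notin> e \<Longrightarrow> misses E (swap_on K c d g) z k \<longleftrightarrow> misses E g z k"
  unfolding misses_def swap_on_def by auto

definition restricts_12 :: "'a set set \<Rightarrow> ('a set \<Rightarrow> nat) \<Rightarrow> ('a set \<Rightarrow> nat) \<Rightarrow> bool" where
  "restricts_12 E g g' \<longleftrightarrow> (\<forall>e\<in>E. g' e \<in> {1,2} \<longrightarrow> g' e = g e)"

definition trims :: "'a set set \<Rightarrow> ('a set \<Rightarrow> nat) \<Rightarrow> ('a set \<Rightarrow> nat) \<Rightarrow> 'a set set \<Rightarrow> bool" where
  "trims E g g' R \<longleftrightarrow> (interchange E 5)\<^sup>*\<^sup>* g g' \<and> restricts_12 E g g' \<and>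
     (\<forall>e\<in>E. g e \<in> {1,2} \<longrightarrow> g' e \<noteq> g e \<longrightarrow> e \<in> R)"

lemma restricts_12_refl: "restricts_12 E g g"
  unfolding restricts_12_def by simp

lemma trims_refl: "trims E g g R"
  unfolding trims_def restricts_12_def by simp

lemma trims_trans: "trims E g1 g2 R1 \<Longrightarrow> trims E g2 g3 R2 \<Longrightarrow> trims E g1 g3 (R1 \<union> R2)"
  unfolding trims_def restricts_12_def by (metis (no_types, lifting) UnI1 UnI2 rtranclp_trans)

lemma trims_mono: "trims E g g' R \<Longrightarrow> R \<subseteq> R' \<Longrightarrow> trims E g g' R'"
  unfolding trims_def by blast

lemma trims_proper:
  "trims E g g' R \<Longrightarrow> proper_edge_coloring E 5 g \<Longrightarrow> proper_edge_coloring E 5 g'"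
  unfolding trims_def using interchanges_proper by blast

lemma trims_keep: "trims E g g' R \<Longrightarrow> e \<in> E \<Longrightarrow> g e \<in> {1,2} \<Longrightarrow> e \<notin> R \<Longrightarrow> g' e = g e"
  unfolding trims_def by blast

text \<open>A 1,2-edge whose ends both miss the colour \<open>c\<close> forms a Kempe chain on its own.\<close>

lemma trims_recolour_edge:
  assumes P: "proper_edge_coloring E 5 g" and r: "{p, q} \<in> E" "g {p, q} \<in> {1,2}"
    and c: "c \<in> {3,4,5}" "misses E g p c" "misses E g q c"
  shows "trims E g (g({p, q} := c)) {{p, q}}"
proof -
  let ?r = "{p, q}" and ?k = "g {p, q}"
  have rT: "?r \<in> two_color_edges E g ?k c" using r unfolding two_color_edges_def by simp
  have "component E g ?k c ?r \<subseteq> {?r}"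
  proof (rule component_least)
    fix e e' assume "e \<in> {?r}" "e' \<in> two_color_edges E g ?k c" "edges_adj e e'"
    then obtain z where z: "z \<in> ?r" "z \<in> e'" "e' \<in> E" "g e' = ?k \<or> g e' = c"
      unfolding edges_adj_def two_color_edges_def by blast
    then have "g e' = ?k" using c z unfolding misses_def by blast
    then show "e' \<in> {?r}" using proper_edge_coloring_eqD[OF P z(3) r(1) z(2) z(1)] by simp
  qed simp
  then have K: "component E g ?k c ?r = {?r}" using component_self[OF rT] by blast
  have "interchange E 5 g (g(?r := c))"
    unfolding interchange_def
    using rT r c by (intro exI[of _ ?k] exI[of _ c] exI[of _ ?r]) (auto simp: K swap_on_def fun_eq_iff)
  then show ?thesis using c unfolding trims_def restricts_12_def by auto
qed

lemma trims_swap_free_colours: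
  assumes c: "c \<in> {3,4,5}" "d \<in> {3,4,5}" "c \<noteq> d" and e0: "e0 \<in> E" "g e0 = c"
  shows "trims E g (swap_on (component E g c d e0) c d g) {}"
proof -
  let ?K = "component E g c d e0"
  have "e0 \<in> two_color_edges E g c d" using e0 unfolding two_color_edges_def by simp
  then have "interchange E 5 g (swap_on ?K c d g)"
    unfolding interchange_def using c by (intro exI[of _ c] exI[of _ d] exI[of _ e0]) auto
  moreover have "g e \<notin> {1,2} \<and> swap_on ?K c d g e \<notin> {1,2}" if "e \<in> ?K" for e
    using component_colour[OF that] c unfolding swap_on_def by auto
  ultimately show ?thesis
    unfolding trims_def restricts_12_def swap_on_def by (auto split: if_splits)
qed

subsection \<open>Kempe chains have at most two ends\<close>

lemma card_Un_Union_meeting_le: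
  assumes "finite N" "finite A" "\<forall>e\<in>N. card e = 2 \<and> e \<inter> A \<noteq> {}"
  shows "card (A \<union> \<Union>N) \<le> card A + card N"
  using assms
proof (induction N rule: finite_induct)
  case empty
  then show ?case by simp
next
  case (insert e N)
  let ?B = "A \<union> \<Union>N"
  have IH: "card ?B \<le> card A + card N" using insert by blast
  have "finite d" if "d \<in> N" for d using insert.prems(2) that by (intro card_ge_0_finite) auto
  then have "finite ?B" using insert.hyps(1) insert.prems(1) by (auto intro: finite_Union)
  obtain u where u: "u \<in> e" "u \<in> A" using insert.prems(2) by blast
  obtain v w where vw: "e = {v, w}" "v \<noteq> w" using insert.prems(2) by (meson card_2_iff insertI1)
  have "A \<union> \<Union>(insert e N) = insert (if u = v then w else v) ?B" using vw u by auto
  then have "card (A \<union> \<Union>(insert e N)) \<le> card ?B + 1"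
    using \<open>finite ?B\<close> by (simp add: card_insert_if)
  then show ?case using IH insert.hyps by simp
qed

text \<open>A connected set of edges spans at most one more vertex than it has edges; the proof
  grows the set by breadth-first layers, each new edge adding at most one new vertex.\<close>

lemma card_Union_layers_le:
  fixes R :: "'a set \<Rightarrow> 'a set \<Rightarrow> bool"
  assumes fin: "finite {e. R\<^sup>*\<^sup>* e0 e}" and "card e0 = 2"
    and R: "\<And>d e. R d e \<Longrightarrow> card e = 2 \<and> d \<inter> e \<noteq> {}"
  shows "card (\<Union>{e. \<exists>i\<le>n. (R ^^ i) e0 e}) \<le> card {e. \<exists>i\<le>n. (R ^^ i) e0 e} + 1"
proof -
  let ?C = "{e. R\<^sup>*\<^sup>* e0 e}"
  define B where "B n = {e. \<exists>i\<le>n. (R ^^ i) e0 e}" for n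
  have BC: "B n \<subseteq> ?C" for n unfolding B_def using relpowp_imp_rtranclp by fast
  have two: "card e = 2" if "e \<in> ?C" for e
  proof -
    from that have "R\<^sup>*\<^sup>* e0 e" by simp
    then show ?thesis using \<open>card e0 = 2\<close> by (induction rule: rtranclp_induct) (auto dest: R)
  qed
  have finB: "finite (B n)" "finite (\<Union>(B n))" for n
  proof -
    show "finite (B n)" using BC fin by (rule finite_subset)
    moreover have "finite e" if "e \<in> B n" for e
      using two[of e] BC that by (intro card_ge_0_finite) fastforce
    ultimately show "finite (\<Union>(B n))" by blast
  qed
  have "card (\<Union>(B n)) \<le> card (B n) + 1"
  proof (induction n)
    case 0
    have "B 0 = {e0}" unfolding B_def by simp
    then show ?case using \<open>card e0 = 2\<close> by simp
  next
    case (Suc n)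
    define N where "N = {e. (R ^^ Suc n) e0 e} - B n"
    have BS: "B (Suc n) = B n \<union> N"
      unfolding B_def N_def by (auto simp: le_Suc_eq simp del: relpowp.simps)
    have "finite N" using finB(1)[of "Suc n"] BS by simp
    have "\<forall>e\<in>N. card e = 2 \<and> e \<inter> \<Union>(B n) \<noteq> {}"
    proof
      fix e assume "e \<in> N"
      then obtain d where "(R ^^ n) e0 d" "R d e" unfolding N_def by (auto elim: relpowp_Suc_E)
      moreover from this have "d \<in> B n" unfolding B_def by blast
      ultimately show "card e = 2 \<and> e \<inter> \<Union>(B n) \<noteq> {}" using R by blast
    qed
    then have "card (\<Union>(B n) \<union> \<Union>N) \<le> card (\<Union>(B n)) + card N"
      by (intro card_Un_Union_meeting_le \<open>finite N\<close> finB(2))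
    moreover have "card (B (Suc n)) = card (B n) + card N"
      unfolding BS using finB(1) \<open>finite N\<close> by (intro card_Un_disjoint) (auto simp: N_def)
    ultimately show ?case using Suc.IH BS by simp
  qed
  then show ?thesis unfolding B_def .
qed

lemma card_Union_reachable_le:
  fixes R :: "'a set \<Rightarrow> 'a set \<Rightarrow> bool"
  assumes fin: "finite {e. R\<^sup>*\<^sup>* e0 e}" and "card e0 = 2"
    and R: "\<And>d e. R d e \<Longrightarrow> card e = 2 \<and> d \<inter> e \<noteq> {}"
  shows "card (\<Union>{e. R\<^sup>*\<^sup>* e0 e}) \<le> card {e. R\<^sup>*\<^sup>* e0 e} + 1"
proof -
  let ?C = "{e. R\<^sup>*\<^sup>* e0 e}"
  obtain steps where steps: "\<forall>e\<in>?C. (R ^^ steps e) e0 e"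
    using rtranclp_power by (metis mem_Collect_eq)
  have "{e. \<exists>i\<le>Max (steps ` ?C). (R ^^ i) e0 e} = ?C"
    using steps fin relpowp_imp_rtranclp by (fastforce intro!: Max_ge)
  then show ?thesis using card_Union_layers_le[OF assms, of "Max (steps ` ?C)"] by simp
qed

lemma sum_card_incident:
  assumes "finite K" "\<forall>e\<in>K. finite e"
  shows "(\<Sum>z\<in>\<Union>K. card {e\<in>K. z \<in> e}) = (\<Sum>e\<in>K. card e)"
proof -
  have "(\<Sum>z\<in>\<Union>K. card {e\<in>K. z \<in> e}) = (\<Sum>z\<in>\<Union>K. \<Sum>e\<in>K. if z \<in> e then 1 else 0)"
    using sum.inter_filter[OF assms(1), of "\<lambda>_. 1::nat"] by simp
  also have "\<dots> = (\<Sum>e\<in>K. \<Sum>z\<in>\<Union>K. if z \<in> e then 1 else 0)" by (rule sum.swap)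
  also have "\<dots> = (\<Sum>e\<in>K. card e)"
  proof (rule sum.cong)
    fix e assume "e \<in> K"
    then have "{z\<in>\<Union>K. z \<in> e} = e" by blast
    then show "(\<Sum>z\<in>\<Union>K. if z \<in> e then 1 else 0) = card e"
      using sum.inter_filter[of "\<Union>K" "\<lambda>_. 1::nat" "\<lambda>z. z \<in> e"] assms by simp
  qed simp
  finally show ?thesis .
qed

lemma component_eq_reachable:
  assumes "e0 \<in> two_color_edges E g a b"
  shows "component E g a b e0 =
    {e. (\<lambda>x y. x \<in> two_color_edges E g a b \<and> y \<in> two_color_edges E g a b \<and> edges_adj x y)\<^sup>*\<^sup>* e0 e}"
  unfolding component_def using assms by (auto elim: rtranclp.cases)

lemma card_vertices_component_le:
  assumes "finite E" "\<forall>e\<in>E. card e = 2" "e0 \<in> two_color_edges E g a b"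
  shows "card (\<Union>(component E g a b e0)) \<le> card (component E g a b e0) + 1"
  unfolding component_eq_reachable[OF assms(3)]
proof (rule card_Union_reachable_le)
  show "finite {e. (\<lambda>x y. x \<in> two_color_edges E g a b \<and> y \<in> two_color_edges E g a b \<and> edges_adj x y)\<^sup>*\<^sup>* e0 e}"
    using component_eq_reachable[OF assms(3)] component_subset_edges \<open>finite E\<close>
    by (metis finite_subset)
qed (use assms in \<open>auto simp: two_color_edges_def edges_adj_def\<close>)

lemma card_component_edges_at_le:
  assumes P: "proper_edge_coloring E t g"
  shows "card {e\<in>component E g a b e0. z \<in> e} \<le> 2"
proof -
  let ?K = "component E g a b e0"
  have "inj_on g {e\<in>?K. z \<in> e}"
    using proper_edge_coloring_eqD[OF P] component_subset_edges unfolding inj_on_def by blast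
  moreover have "g ` {e\<in>?K. z \<in> e} \<subseteq> {a, b}" using component_colour by blast
  ultimately have "card {e\<in>?K. z \<in> e} \<le> card {a, b}" by (meson card_inj_on_le finite.emptyI finite.insertI)
  also have "\<dots> \<le> 2" by (simp add: card_insert_if)
  finally show ?thesis .
qed

lemma component_nonempty_imp_two_color:
  "component E g a b e0 \<noteq> {} \<Longrightarrow> e0 \<in> two_color_edges E g a b"
  unfolding component_def by (auto elim: converse_rtranclpE)

text \<open>Every vertex has at most two edges in a Kempe chain, so by counting incidences a chain
  with three ends would span at least two more vertices than it has edges.\<close>

lemma component_not_three_ends:
  assumes SG: "simple_graph V E" and P: "proper_edge_coloring E t g"
    and dist: "p \<noteq> q" "p \<noteq> r" "q \<noteq> r"
    and ends: "card {e\<in>component E g a b e0. p \<in> e} = 1" "card {e\<in>component E g a b e0. q \<in> e} = 1"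
      "card {e\<in>component E g a b e0. r \<in> e} = 1"
  shows False
proof -
  let ?K = "component E g a b e0"
  let ?W = "\<Union>?K"
  let ?d = "\<lambda>z. card {e\<in>?K. z \<in> e}"
  have fin: "finite E" using simple_graph_finite_edges[OF SG] .
  have two: "\<forall>e\<in>E. card e = 2" using simple_graph_card_edge[OF SG] by blast
  have finK: "finite ?K" using component_subset_edges fin by (rule finite_subset)
  have fin2: "finite e \<and> card e = 2" if "e \<in> ?K" for e
    using that component_subset_edges two by (metis card.infinite subsetD zero_neq_numeral)
  have "?K \<noteq> {}" using ends(1) by (metis (no_types, lifting) card.empty empty_Collect_eq empty_iff zero_neq_one)
  then have "e0 \<in> two_color_edges E g a b" by (rule component_nonempty_imp_two_color)
  then have vb: "card ?W \<le> card ?K + 1" using card_vertices_component_le fin two by blast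
  have deg2: "?d z \<le> 2" for z using card_component_edges_at_le[OF P] .
  have "z \<in> ?W" if "?d z = 1" for z
  proof -
    from that obtain e where "{e\<in>?K. z \<in> e} = {e}" by (rule card_1_singletonE)
    then show ?thesis by blast
  qed
  then have pqr: "{p, q, r} \<subseteq> ?W" using ends by blast
  have finW: "finite ?W" using finK fin2 by blast
  have "2 * card ?K = (\<Sum>z\<in>?W. ?d z)"
    using sum_card_incident[of ?K] finK fin2 by simp
  also have "\<dots> = (\<Sum>z\<in>?W - {p, q, r}. ?d z) + (\<Sum>z\<in>{p, q, r}. ?d z)"
    using sum.subset_diff[OF pqr finW] by simp
  also have "(\<Sum>z\<in>{p, q, r}. ?d z) = 3" using dist ends by simp
  also have "(\<Sum>z\<in>?W - {p, q, r}. ?d z) \<le> 2 * card (?W - {p, q, r})"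
    using deg2 sum_bounded_above[of "?W - {p, q, r}" ?d 2] by simp
  also have "card (?W - {p, q, r}) = card ?W - 3"
    using card_Diff_subset[OF _ pqr] dist by simp
  finally have "2 * card ?K \<le> 2 * (card ?W - 3) + 3" by simp
  moreover have "card ?W \<ge> 3" using card_mono[OF finW pqr] dist by simp
  ultimately show False using vb by linarith
qed

lemma component_end:
  assumes P: "proper_edge_coloring E t g" and e: "e \<in> component E g a b e0" "z \<in> e"
    and "misses E g z a \<or> misses E g z b"
  shows "card {e\<in>component E g a b e0. z \<in> e} = 1"
proof -
  let ?K = "component E g a b e0"
  have "e' = e" if "e' \<in> ?K" "z \<in> e'" for e'
  proof (rule proper_edge_coloring_eqD[OF P _ _ \<open>z \<in> e'\<close> \<open>z \<in> e\<close>])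
    show "e' \<in> E" "e \<in> E" using that e component_subset_edges by blast+
    then show "g e' = g e"
      using component_colour[OF that(1)] component_colour[OF e(1)] assms(4) that(2) e(2)
      unfolding misses_def by metis
  qed
  then have "{e\<in>?K. z \<in> e} = {e}" using e by blast
  then show ?thesis by simp
qed

text \<open>The \<open>c,d\<close>-chain through the \<open>c\<close>-edge at \<open>q\<close> ends at \<open>q\<close>, so it cannot reach both of
  two further vertices missing \<open>c\<close>: these would be two more ends.\<close>

lemma swap_frees_colour:
  assumes SG: "simple_graph V E" and P: "proper_edge_coloring E 5 g"
    and cd: "c \<in> {3,4,5}" "d \<in> {3,4,5}"
    and q: "\<not> misses E g q c" "misses E g q d"
    and p: "misses E g p c" "misses E g p' c" "p \<noteq> q" "p' \<noteq> q" "p \<noteq> p'"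
  obtains g' where "trims E g g' {}" "misses E g' q c" "misses E g' p c \<or> misses E g' p' c"
proof -
  obtain s where s: "s \<in> E" "q \<in> s" "g s = c" using q(1) unfolding misses_def by blast
  have "c \<noteq> d" using q(2) s unfolding misses_def by blast
  let ?L = "component E g c d s"
  have sL: "s \<in> ?L" using s by (intro component_self) (simp add: two_color_edges_def)
  have "trims E g (swap_on ?L c d g) {}"
    by (rule trims_swap_free_colours[of c d s E g]) (use cd \<open>c \<noteq> d\<close> s in auto)
  moreover have "misses E (swap_on ?L c d g) q c"
    using misses_swap_on_component[OF P s q(2)] .
  moreover have "misses E (swap_on ?L c d g) p c \<or> misses E (swap_on ?L c d g) p' c"
  proof (rule ccontr)
    assume "\<not> ?thesis"
    then obtain e e' where "e \<in> ?L" "p \<in> e" "e' \<in> ?L" "p' \<in> e'"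
      using misses_swap_on_untouched p(1,2) by metis
    then have "card {e\<in>?L. p \<in> e} = 1" "card {e\<in>?L. p' \<in> e} = 1" "card {e\<in>?L. q \<in> e} = 1"
      using component_end[OF P] sL s(2) p(1,2) q(2) by blast+
    then show False using component_not_three_ends[OF SG P p(5,3,4)] by blast
  qed
  ultimately show thesis using that by blast
qed

subsection \<open>Cutting short 1,2-paths\<close>

definition cuts :: "'a set set \<Rightarrow> ('a set \<Rightarrow> nat) \<Rightarrow> 'a set set \<Rightarrow> bool" where
  "cuts E g R \<longleftrightarrow> (\<exists>g'. trims E g g' R \<and> (\<exists>r\<in>R. g' r \<notin> {1,2}))"

lemma cuts_mono: "cuts E g R \<Longrightarrow> R \<subseteq> R' \<Longrightarrow> cuts E g R'"
  unfolding cuts_def using trims_mono by blast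

lemma cuts_after_trims: "trims E g g1 {} \<Longrightarrow> cuts E g1 R \<Longrightarrow> cuts E g R"
  unfolding cuts_def using trims_trans by fastforce

lemma cuts_recolour_edge:
  assumes "proper_edge_coloring E 5 g" "{p, q} \<in> E" "g {p, q} \<in> {1,2}"
    and "c \<in> {3,4,5}" "misses E g p c" "misses E g q c"
  shows "cuts E g {{p, q}}"
  unfolding cuts_def using trims_recolour_edge[OF assms] assms(4) by fastforce

lemma cuts_two_edge_path:
  assumes SG: "simple_graph V E" and P: "proper_edge_coloring E 5 g"
    and r: "{q0, q1} \<in> E" "g {q0, q1} \<in> {1,2}" "{q1, q2} \<in> E" "g {q1, q2} \<in> {1,2}"
    and dist: "q0 \<noteq> q1" "q1 \<noteq> q2" "q0 \<noteq> q2"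
    and c: "c \<in> {3,4,5}" "misses E g q0 c" "misses E g q2 c"
    and d: "d \<in> {3,4,5}" "misses E g q1 d"
  shows "cuts E g {{q0, q1}, {q1, q2}}"
proof (cases "misses E g q1 c")
  case True
  then show ?thesis using cuts_recolour_edge[OF P r(1,2) c(1,2)] by (rule_tac cuts_mono) auto
next
  case False
  obtain g1 where g1: "trims E g g1 {}" "misses E g1 q1 c" "misses E g1 q0 c \<or> misses E g1 q2 c"
    using swap_frees_colour[OF SG P c(1) d(1) False d(2) c(2,3)] dist by metis
  have P1: "proper_edge_coloring E 5 g1" using trims_proper[OF g1(1) P] .
  have kept: "g1 {q0, q1} \<in> {1,2}" "g1 {q1, q2} \<in> {1,2}"
    using trims_keep[OF g1(1) r(1,2)] trims_keep[OF g1(1) r(3,4)] r(2,4) by simp_all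
  from g1(3) have "cuts E g1 {{q0, q1}, {q1, q2}}"
  proof
    assume "misses E g1 q0 c"
    then show ?thesis using cuts_recolour_edge[OF P1 r(1) kept(1) c(1) _ g1(2)] by (rule_tac cuts_mono) auto
  next
    assume "misses E g1 q2 c"
    then show ?thesis using cuts_recolour_edge[OF P1 r(3) kept(2) c(1) g1(2)] by (rule_tac cuts_mono) auto
  qed
  then show ?thesis using cuts_after_trims[OF g1(1)] by blast
qed

lemma cuts_three_edge_path_ends_share_colour:
  assumes SG: "simple_graph V E" and P: "proper_edge_coloring E 5 g"
    and deg: "\<And>z. card {e\<in>E. z \<in> e} \<le> 4"
    and path: "{p0, p1} \<in> E" "g {p0, p1} = 1" "{p1, p2} \<in> E" "g {p1, p2} = 2"
      "{p2, p3} \<in> E" "g {p2, p3} = 1"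
    and dist: "p0 \<noteq> p1" "p1 \<noteq> p2" "p2 \<noteq> p3" "p0 \<noteq> p2" "p1 \<noteq> p3" "p0 \<noteq> p3"
    and a: "a \<in> {3,4,5}" "misses E g p0 a" "misses E g p3 a" "\<not> misses E g p1 a"
    and b: "b \<in> {3,4,5}" "misses E g p1 b"
  shows "cuts E g {{p0, p1}, {p1, p2}, {p2, p3}}"
proof -
  obtain g1 where g1: "trims E g g1 {}" "misses E g1 p1 a" "misses E g1 p0 a \<or> misses E g1 p3 a"
    using swap_frees_colour[OF SG P a(1) b(1) a(4) b(2) a(2,3)] dist by metis
  have P1: "proper_edge_coloring E 5 g1" using trims_proper[OF g1(1) P] .
  have kept: "g1 {p0, p1} = 1" "g1 {p1, p2} = 2" "g1 {p2, p3} = 1"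
    using trims_keep[OF g1(1) path(1)] trims_keep[OF g1(1) path(3)] trims_keep[OF g1(1) path(5)]
      path(2,4,6) by simp_all
  from g1(3) have "cuts E g1 {{p0, p1}, {p1, p2}, {p2, p3}}"
  proof
    assume "misses E g1 p0 a"
    then show ?thesis
      using cuts_recolour_edge[OF P1 path(1) _ a(1) _ g1(2)] kept(1) by (rule_tac cuts_mono) auto
  next
    assume p3: "misses E g1 p3 a"
    obtain t where "t \<in> {3,4,5}" "misses E g1 p2 t"
      using misses_some_free_colour[OF simple_graph_finite_edges[OF SG] deg path(5) _ kept(3) path(3) _ kept(2)]
      by auto
    then have "cuts E g1 {{p1, p2}, {p2, p3}}"
      using cuts_two_edge_path[OF SG P1 path(3) _ path(5) _ dist(2,3,5) a(1) g1(2) p3] kept by simp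
    then show ?thesis by (rule cuts_mono) blast
  qed
  then show ?thesis using cuts_after_trims[OF g1(1)] by blast
qed

lemma cuts_three_edge_path_shared_colour:
  assumes SG: "simple_graph V E" and P: "proper_edge_coloring E 5 g"
    and path: "{p0, p1} \<in> E" "g {p0, p1} \<in> {1,2}" "{p1, p2} \<in> E" "g {p1, p2} \<in> {1,2}"
      "{p2, p3} \<in> E" "g {p2, p3} \<in> {1,2}"
    and dist: "p0 \<noteq> p1" "p1 \<noteq> p2" "p2 \<noteq> p3" "p0 \<noteq> p2" "p1 \<noteq> p3"
    and free0: "\<alpha> \<in> {3,4,5}" "misses E g p0 \<alpha>" and free1: "\<beta> \<in> {3,4,5}" "misses E g p1 \<beta>"
    and free2: "\<gamma> \<in> {3,4,5}" "misses E g p2 \<gamma>"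
    and shared: "misses E g p1 \<alpha> \<or> misses E g p2 \<beta> \<or> misses E g p3 \<gamma> \<or> misses E g p2 \<alpha> \<or> misses E g p3 \<beta>"
  shows "cuts E g {{p0, p1}, {p1, p2}, {p2, p3}}"
  using shared
proof (elim disjE)
  assume "misses E g p1 \<alpha>"
  then have "cuts E g {{p0, p1}}" using cuts_recolour_edge[OF P path(1,2) free0] by blast
  then show ?thesis by (rule cuts_mono) simp
next
  assume "misses E g p2 \<beta>"
  then have "cuts E g {{p1, p2}}" using cuts_recolour_edge[OF P path(3,4) free1] by blast
  then show ?thesis by (rule cuts_mono) simp
next
  assume "misses E g p3 \<gamma>"
  then have "cuts E g {{p2, p3}}" using cuts_recolour_edge[OF P path(5,6) free2] by blast
  then show ?thesis by (rule cuts_mono) simp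
next
  assume "misses E g p2 \<alpha>"
  then have "cuts E g {{p0, p1}, {p1, p2}}"
    using cuts_two_edge_path[OF SG P path(1-4) dist(1,2,4) free0 _ free1] by blast
  then show ?thesis by (rule cuts_mono) blast
next
  assume "misses E g p3 \<beta>"
  then have "cuts E g {{p1, p2}, {p2, p3}}"
    using cuts_two_edge_path[OF SG P path(3-6) dist(2,3,5) free1 _ free2] by blast
  then show ?thesis by (rule cuts_mono) blast
qed

text \<open>Each of the four vertices sees colours 1 and 2, hence misses one of 3, 4, 5. If two of them
  miss a common colour, an edge between them can be recoloured, possibly after one interchange of
  free colours; otherwise the free colours at \<open>p0, p1, p2\<close> are distinct and \<open>p3\<close> must repeat the
  one at \<open>p0\<close>.\<close>

lemma cuts_three_edge_path:
  assumes SG: "simple_graph V E" and P: "proper_edge_coloring E 5 g"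
    and deg: "\<And>z. card {e\<in>E. z \<in> e} \<le> 4"
    and path: "{p0, p1} \<in> E" "g {p0, p1} = 1" "{p1, p2} \<in> E" "g {p1, p2} = 2"
      "{p2, p3} \<in> E" "g {p2, p3} = 1"
    and ends: "e0 \<in> E" "p0 \<in> e0" "g e0 = 2" "e4 \<in> E" "p3 \<in> e4" "g e4 = 2"
    and dist: "p0 \<noteq> p1" "p1 \<noteq> p2" "p2 \<noteq> p3" "p0 \<noteq> p2" "p1 \<noteq> p3" "p0 \<noteq> p3"
  shows "cuts E g {{p0, p1}, {p1, p2}, {p2, p3}}"
proof -
  have fin: "finite E" using simple_graph_finite_edges[OF SG] .
  obtain \<alpha> where free0: "\<alpha> \<in> {3,4,5}" "misses E g p0 \<alpha>"
    using misses_some_free_colour[OF fin deg path(1) _ path(2) ends(1-3)] by auto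
  obtain \<beta> where free1: "\<beta> \<in> {3,4,5}" "misses E g p1 \<beta>"
    using misses_some_free_colour[OF fin deg path(1) _ path(2) path(3) _ path(4)] by auto
  obtain \<gamma> where free2: "\<gamma> \<in> {3,4,5}" "misses E g p2 \<gamma>"
    using misses_some_free_colour[OF fin deg path(5) _ path(6) path(3) _ path(4)] by auto
  obtain \<delta> where free3: "\<delta> \<in> {3,4,5}" "misses E g p3 \<delta>"
    using misses_some_free_colour[OF fin deg path(5) _ path(6) ends(4-6)] by auto
  show ?thesis
  proof (cases "misses E g p1 \<alpha> \<or> misses E g p2 \<beta> \<or> misses E g p3 \<gamma> \<or> misses E g p2 \<alpha> \<or> misses E g p3 \<beta>")
    case True
    then show ?thesis
      using cuts_three_edge_path_shared_colour[OF SG P path(1) _ path(3) _ path(5) _ dist(1-5) free0 free1 free2] path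
      by simp
  next
    case False
    then have "\<alpha> \<noteq> \<beta>" "\<beta> \<noteq> \<gamma>" "\<alpha> \<noteq> \<gamma>" "\<delta> \<noteq> \<beta>" "\<delta> \<noteq> \<gamma>" using free1 free2 free3 by auto
    then have "misses E g p3 \<alpha>" using free0(1) free1(1) free2(1) free3 by auto
    then show ?thesis using cuts_three_edge_path_ends_share_colour[OF SG P deg path dist free0] False free1 by blast
  qed
qed

subsection \<open>Closing off the chain beyond an end of \<open>xy\<close>\<close>

text \<open>\<open>A\<close> is the part of the 1,2-chain of \<open>xy\<close> lying beyond the end \<open>y\<close> of \<open>xy\<close>.\<close>

definition clean_side :: "'a set set \<Rightarrow> ('a set \<Rightarrow> nat) \<Rightarrow> ('a set \<Rightarrow> nat) \<Rightarrow> 'a set \<Rightarrow> 'a \<Rightarrow> bool" where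
  "clean_side E h g xy y \<longleftrightarrow> (\<exists>A \<subseteq> two_color_edges E g 1 2. (\<forall>e\<in>A. g e = 1 \<longrightarrow> h e \<noteq> 1) \<and>
     (\<forall>z \<in> insert y (\<Union>A). \<forall>e\<in>E. z \<in> e \<longrightarrow> g e \<in> {1,2} \<longrightarrow> e \<in> insert xy A))"

lemma clean_sideI:
  assumes "A \<subseteq> two_color_edges E g 1 2" "\<forall>e\<in>A. g e = 1 \<longrightarrow> h e \<noteq> 1" "insert y (\<Union>A) \<subseteq> Z"
    and "\<forall>z\<in>Z. \<forall>e\<in>E. z \<in> e \<longrightarrow> g e \<in> {1,2} \<longrightarrow> e \<in> insert xy A"
  shows "clean_side E h g xy y"
proof -
  have "\<forall>z\<in>insert y (\<Union>A). \<forall>e\<in>E. z \<in> e \<longrightarrow> g e \<in> {1,2} \<longrightarrow> e \<in> insert xy A"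
    using assms(3,4) by blast
  then show ?thesis unfolding clean_side_def using assms(1,2) by blast
qed

lemma clean_side_restricts_12:
  assumes "clean_side E h g xy y" "restricts_12 E g g'"
  shows "clean_side E h g' xy y"
proof -
  obtain A where A: "A \<subseteq> two_color_edges E g 1 2" "\<forall>e\<in>A. g e = 1 \<longrightarrow> h e \<noteq> 1"
    "\<forall>z \<in> insert y (\<Union>A). \<forall>e\<in>E. z \<in> e \<longrightarrow> g e \<in> {1,2} \<longrightarrow> e \<in> insert xy A"
    using assms(1) unfolding clean_side_def by blast
  have same: "g' e = g e" if "e \<in> E" "g' e \<in> {1,2}" for e
    using assms(2) that unfolding restricts_12_def by blast
  show ?thesis
  proof (rule clean_sideI[where A = "{e\<in>A. g' e \<in> {1,2}}" and Z = "insert y (\<Union>A)"])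
    show "{e\<in>A. g' e \<in> {1,2}} \<subseteq> two_color_edges E g' 1 2"
      using A(1) unfolding two_color_edges_def by auto
    show "\<forall>e\<in>{e\<in>A. g' e \<in> {1,2}}. g' e = 1 \<longrightarrow> h e \<noteq> 1"
      using A(1,2) same unfolding two_color_edges_def by auto
    show "\<forall>z\<in>insert y (\<Union>A). \<forall>e\<in>E. z \<in> e \<longrightarrow> g' e \<in> {1,2} \<longrightarrow> e \<in> insert xy {e\<in>A. g' e \<in> {1,2}}"
      using A(3) same by (metis (mono_tags, lifting) insert_iff mem_Collect_eq)
  qed blast
qed

lemma component_within_clean_sides:
  assumes "clean_side E h g {x, y} y" "clean_side E h g {x, y} x" "{x, y} \<in> two_color_edges E g 1 2"
  obtains Ay Ax where "component E g 1 2 {x, y} \<subseteq> insert {x, y} (Ay \<union> Ax)"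
    "\<forall>e\<in>Ay \<union> Ax. g e = 1 \<longrightarrow> h e \<noteq> 1"
proof -
  obtain Ay where Ay: "\<forall>e\<in>Ay. g e = 1 \<longrightarrow> h e \<noteq> 1"
    "\<forall>z \<in> insert y (\<Union>Ay). \<forall>e\<in>E. z \<in> e \<longrightarrow> g e \<in> {1,2} \<longrightarrow> e \<in> insert {x, y} Ay"
    using assms(1) unfolding clean_side_def by blast
  obtain Ax where Ax: "\<forall>e\<in>Ax. g e = 1 \<longrightarrow> h e \<noteq> 1"
    "\<forall>z \<in> insert x (\<Union>Ax). \<forall>e\<in>E. z \<in> e \<longrightarrow> g e \<in> {1,2} \<longrightarrow> e \<in> insert {x, y} Ax"
    using assms(2) unfolding clean_side_def by blast
  have "component E g 1 2 {x, y} \<subseteq> insert {x, y} (Ay \<union> Ax)"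
  proof (rule component_least)
    fix e e' assume e: "e \<in> insert {x, y} (Ay \<union> Ax)" and e': "e' \<in> two_color_edges E g 1 2"
      and "edges_adj e e'"
    then obtain z where "z \<in> e" "z \<in> e'" unfolding edges_adj_def by blast
    moreover have "e' \<in> E" "g e' \<in> {1,2}" using e' unfolding two_color_edges_def by auto
    ultimately show "e' \<in> insert {x, y} (Ay \<union> Ax)" using e Ay(2) Ax(2) by blast
  qed simp
  then show thesis using that Ay(1) Ax(1) by blast
qed

lemma card_overlap_increases_by_swap:
  assumes "finite E" and xy: "xy \<in> two_color_edges E g 1 2" "g xy = 2" "h xy = 1"
    and clean: "\<forall>e\<in>component E g 1 2 xy. g e = 1 \<longrightarrow> h e \<noteq> 1"
  shows "card (color_class E (swap_on (component E g 1 2 xy) 1 2 g) 1 \<inter> color_class E h 1)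
    > card (color_class E g 1 \<inter> color_class E h 1)"
proof -
  let ?K = "component E g 1 2 xy"
  have "xy \<in> ?K" using component_self[OF xy(1)] .
  then have "color_class E g 1 \<inter> color_class E h 1 \<subset>
      color_class E (swap_on ?K 1 2 g) 1 \<inter> color_class E h 1"
    using clean xy unfolding color_class_def swap_on_def two_color_edges_def by auto
  then show ?thesis using \<open>finite E\<close> by (intro psubset_card_mono) (auto simp: color_class_def)
qed

lemma edges_coloured_at_vertex_in:
  assumes P: "proper_edge_coloring E t g" and "restricts_12 E g g'" "k \<in> {1,2}"
    and "(\<exists>w\<in>S. w \<in> E \<and> z \<in> w \<and> g w = k) \<or> (\<forall>e\<in>E. z \<in> e \<longrightarrow> g e = k \<longrightarrow> g' e \<noteq> k)"
  shows "\<forall>e\<in>E. z \<in> e \<longrightarrow> g' e = k \<longrightarrow> e \<in> S"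
proof (intro ballI impI)
  fix e assume e: "e \<in> E" "z \<in> e" "g' e = k"
  then have "g e = k" using assms(2,3) unfolding restricts_12_def by metis
  from assms(4) show "e \<in> S"
  proof
    assume "\<exists>w\<in>S. w \<in> E \<and> z \<in> w \<and> g w = k"
    then obtain w where "w \<in> S" "w \<in> E" "z \<in> w" "g w = k" by blast
    then show ?thesis using proper_edge_coloring_eqD[OF P e(1) \<open>w \<in> E\<close> e(2)] \<open>g e = k\<close> by simp
  qed (use e \<open>g e = k\<close> in blast)
qed

lemma edges_12_at_vertex_in:
  assumes "proper_edge_coloring E t g" "restricts_12 E g g'"
    and "(\<exists>w\<in>S. w \<in> E \<and> z \<in> w \<and> g w = 1) \<or> (\<forall>e\<in>E. z \<in> e \<longrightarrow> g e = 1 \<longrightarrow> g' e \<noteq> 1)"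
    and "(\<exists>w\<in>S. w \<in> E \<and> z \<in> w \<and> g w = 2) \<or> (\<forall>e\<in>E. z \<in> e \<longrightarrow> g e = 2 \<longrightarrow> g' e \<noteq> 2)"
  shows "\<forall>e\<in>E. z \<in> e \<longrightarrow> g' e \<in> {1,2} \<longrightarrow> e \<in> S"
  using edges_coloured_at_vertex_in[OF assms(1,2) _ assms(3)] edges_coloured_at_vertex_in[OF assms(1,2) _ assms(4)]
  by auto

lemma clean_side_path0:
  assumes P: "proper_edge_coloring E t g" and "restricts_12 E g g'"
    and xy: "xy \<in> E" "y \<in> xy" "g xy = 2"
    and cut: "\<forall>e\<in>E. y \<in> e \<longrightarrow> g e = 1 \<longrightarrow> g' e \<noteq> 1"
  shows "clean_side E h g' xy y"
proof (rule clean_sideI[where A = "{}" and Z = "{y}"])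
  show "\<forall>z\<in>{y}. \<forall>e\<in>E. z \<in> e \<longrightarrow> g' e \<in> {1,2} \<longrightarrow> e \<in> {xy}"
    using edges_12_at_vertex_in[OF assms(1,2), of "{xy}" y] xy cut by blast
qed auto

lemma clean_side_path1:
  assumes P: "proper_edge_coloring E t g" and "restricts_12 E g g'"
    and xy: "xy \<in> E" "y \<in> xy" "g xy = 2"
    and b: "{y, v1} \<in> E" "g {y, v1} = 1" "g' {y, v1} = 1" "h {y, v1} \<noteq> 1"
    and cut: "\<forall>e\<in>E. v1 \<in> e \<longrightarrow> g e = 2 \<longrightarrow> g' e \<noteq> 2"
  shows "clean_side E h g' xy y"
proof (rule clean_sideI[where A = "{{y, v1}}" and Z = "{y, v1}"])
  let ?S = "insert xy {{y, v1}}"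
  have "\<forall>e\<in>E. y \<in> e \<longrightarrow> g' e \<in> {1,2} \<longrightarrow> e \<in> ?S"
    by (rule edges_12_at_vertex_in[OF assms(1,2)]) (use xy b in auto)
  moreover have "\<forall>e\<in>E. v1 \<in> e \<longrightarrow> g' e \<in> {1,2} \<longrightarrow> e \<in> ?S"
    by (rule edges_12_at_vertex_in[OF assms(1,2)]) (use b cut in auto)
  ultimately show "\<forall>z\<in>{y, v1}. \<forall>e\<in>E. z \<in> e \<longrightarrow> g' e \<in> {1,2} \<longrightarrow> e \<in> ?S"
    by (simp only: ball_simps)
qed (use b in \<open>auto simp: two_color_edges_def\<close>)

lemma clean_side_path2:
  assumes P: "proper_edge_coloring E t g" and "restricts_12 E g g'"
    and xy: "xy \<in> E" "y \<in> xy" "g xy = 2"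
    and b: "{y, v1} \<in> E" "g {y, v1} = 1" "g' {y, v1} = 1" "h {y, v1} \<noteq> 1"
    and e2: "{v1, v2} \<in> E" "g {v1, v2} = 2" "g' {v1, v2} = 2"
    and cut: "\<forall>e\<in>E. v2 \<in> e \<longrightarrow> g e = 1 \<longrightarrow> g' e \<noteq> 1"
  shows "clean_side E h g' xy y"
proof (rule clean_sideI[where A = "{{y, v1}, {v1, v2}}" and Z = "{y, v1, v2}"])
  let ?S = "insert xy {{y, v1}, {v1, v2}}"
  have "\<forall>e\<in>E. y \<in> e \<longrightarrow> g' e \<in> {1,2} \<longrightarrow> e \<in> ?S"
    by (rule edges_12_at_vertex_in[OF assms(1,2)]) (use xy b in auto)
  moreover have "\<forall>e\<in>E. v1 \<in> e \<longrightarrow> g' e \<in> {1,2} \<longrightarrow> e \<in> ?S"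
    by (rule edges_12_at_vertex_in[OF assms(1,2)]) (use b e2 in auto)
  moreover have "\<forall>e\<in>E. v2 \<in> e \<longrightarrow> g' e \<in> {1,2} \<longrightarrow> e \<in> ?S"
    by (rule edges_12_at_vertex_in[OF assms(1,2)]) (use e2 cut in auto)
  ultimately show "\<forall>z\<in>{y, v1, v2}. \<forall>e\<in>E. z \<in> e \<longrightarrow> g' e \<in> {1,2} \<longrightarrow> e \<in> ?S"
    by (simp only: ball_simps)
qed (use b e2 in \<open>auto simp: two_color_edges_def\<close>)

lemma clean_side_path3:
  assumes P: "proper_edge_coloring E t g" and "restricts_12 E g g'"
    and xy: "xy \<in> E" "y \<in> xy" "g xy = 2"
    and b: "{y, v1} \<in> E" "g {y, v1} = 1" "g' {y, v1} = 1" "h {y, v1} \<noteq> 1"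
    and e2: "{v1, v2} \<in> E" "g {v1, v2} = 2" "g' {v1, v2} = 2"
    and e3: "{v2, v3} \<in> E" "g {v2, v3} = 1" "g' {v2, v3} = 1" "h {v2, v3} \<noteq> 1"
    and cut: "\<forall>e\<in>E. v3 \<in> e \<longrightarrow> g e = 2 \<longrightarrow> g' e \<noteq> 2"
  shows "clean_side E h g' xy y"
proof (rule clean_sideI[where A = "{{y, v1}, {v1, v2}, {v2, v3}}" and Z = "{y, v1, v2, v3}"])
  let ?S = "insert xy {{y, v1}, {v1, v2}, {v2, v3}}"
  have "\<forall>e\<in>E. y \<in> e \<longrightarrow> g' e \<in> {1,2} \<longrightarrow> e \<in> ?S"
    by (rule edges_12_at_vertex_in[OF assms(1,2)]) (use xy b in auto)
  moreover have "\<forall>e\<in>E. v1 \<in> e \<longrightarrow> g' e \<in> {1,2} \<longrightarrow> e \<in> ?S"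
    by (rule edges_12_at_vertex_in[OF assms(1,2)]) (use b e2 in auto)
  moreover have "\<forall>e\<in>E. v2 \<in> e \<longrightarrow> g' e \<in> {1,2} \<longrightarrow> e \<in> ?S"
    by (rule edges_12_at_vertex_in[OF assms(1,2)]) (use e2 e3 in auto)
  moreover have "\<forall>e\<in>E. v3 \<in> e \<longrightarrow> g' e \<in> {1,2} \<longrightarrow> e \<in> ?S"
    by (rule edges_12_at_vertex_in[OF assms(1,2)]) (use e3 cut in auto)
  ultimately show "\<forall>z\<in>{y, v1, v2, v3}. \<forall>e\<in>E. z \<in> e \<longrightarrow> g' e \<in> {1,2} \<longrightarrow> e \<in> ?S"
    by (simp only: ball_simps)
qed (use b e2 e3 in \<open>auto simp: two_color_edges_def\<close>)

text \<open>Walks of at most three steps reach the edges at distance at most 2 in the sense of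
  \<open>dist_le_on\<close>.\<close>

definition no_h1_near :: "'a set set \<Rightarrow> ('a set \<Rightarrow> nat) \<Rightarrow> ('a set \<Rightarrow> nat) \<Rightarrow> 'a set \<Rightarrow> bool" where
  "no_h1_near E h g xy \<longleftrightarrow>
     (\<forall>n e. n \<le> 3 \<longrightarrow> walk_steps_in (two_color_edges E g 1 2) n xy e \<longrightarrow> g e = 1 \<longrightarrow> h e \<noteq> 1)"

lemma no_h1_nearD:
  "no_h1_near E h g xy \<Longrightarrow> n \<le> 3 \<Longrightarrow> walk_steps_in (two_color_edges E g 1 2) n xy e \<Longrightarrow> g e = 1 \<Longrightarrow> h e \<noteq> 1"
  unfolding no_h1_near_def by blast

lemma walk_steps_in_snoc:
  assumes "walk_steps_in P n a b" "b \<in> P" "c \<in> P" "b \<noteq> c" "z \<in> b" "z \<in> c"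
  shows "walk_steps_in P (Suc n) a c"
  using assms unfolding walk_steps_in_def edges_adj_def by (auto intro: relpowp_Suc_I)

lemma walk_steps_in_target:
  assumes "walk_steps_in P n a b"
  shows "b = a \<or> b \<in> P"
proof (cases n)
  case 0
  then show ?thesis using assms by (simp add: walk_steps_in_def)
next
  case (Suc m)
  then show ?thesis using assms unfolding walk_steps_in_def by (auto elim: relpowp_Suc_E simp del: relpowp.simps)
qed

lemma walk_steps_in_component:
  assumes "e0 \<in> two_color_edges E g a b" "walk_steps_in (two_color_edges E g a b) n e0 e"
  shows "walk_steps_in (component E g a b e0) n e0 e \<and> e \<in> component E g a b e0"
  using assms(2)
proof (induction n arbitrary: e)
  case 0
  then show ?case using component_self[OF assms(1)] unfolding walk_steps_in_def by simp
next
  case (Suc n)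
  then obtain d where d: "walk_steps_in (two_color_edges E g a b) n e0 d"
    "d \<in> two_color_edges E g a b" "e \<in> two_color_edges E g a b" "edges_adj d e"
    unfolding walk_steps_in_def by (auto elim: relpowp_Suc_E)
  then have "e \<in> component E g a b e0" using Suc.IH component_closed by blast
  then show ?case using Suc.IH[OF d(1)] d(4) unfolding walk_steps_in_def by (auto intro: relpowp_Suc_I)
qed

lemma no_h1_near_of_dist:
  assumes "xy \<in> two_color_edges E f 1 2"
    and "\<not> (\<exists>e. dist_le_on (component E f 1 2 xy) xy e 2 \<and> f e = 1 \<and> h e = 1)"
  shows "no_h1_near E h f xy"
  unfolding no_h1_near_def
proof (intro allI impI)
  fix n e assume "n \<le> 3" "walk_steps_in (two_color_edges E f 1 2) n xy e" "f e = 1"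
  then have "walk_steps_in (component E f 1 2 xy) n xy e" "e \<in> component E f 1 2 xy" "n \<le> 2 + 1"
    using walk_steps_in_component[OF assms(1)] by auto
  then have "dist_le_on (component E f 1 2 xy) xy e 2"
    unfolding dist_le_on_def using component_self[OF assms(1)] by blast
  then show "h e \<noteq> 1" using assms(2) \<open>f e = 1\<close> by blast
qed

lemma no_h1_near_restricts_12:
  assumes "no_h1_near E h f xy" "restricts_12 E f g" "xy \<in> E"
  shows "no_h1_near E h g xy"
  unfolding no_h1_near_def
proof (intro allI impI)
  fix n e assume "n \<le> 3" and walk: "walk_steps_in (two_color_edges E g 1 2) n xy e" and "g e = 1"
  have sub: "two_color_edges E g 1 2 \<subseteq> two_color_edges E f 1 2"
    using assms(2) unfolding restricts_12_def two_color_edges_def by auto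
  have "walk_steps_in (two_color_edges E f 1 2) n xy e"
    using walk unfolding walk_steps_in_def by (rule relpowp_mono[rotated]) (use sub in blast)
  moreover have "e \<in> E"
    using walk_steps_in_target[OF walk] \<open>xy \<in> E\<close> unfolding two_color_edges_def by blast
  then have "f e = 1" using assms(2) \<open>g e = 1\<close> unfolding restricts_12_def by auto
  ultimately show "h e \<noteq> 1" using assms(1) \<open>n \<le> 3\<close> unfolding no_h1_near_def by blast
qed

lemma clean_side_after_cut:
  assumes P: "proper_edge_coloring E t g" and sh: "restricts_12 E g g'"
    and xy: "xy \<in> E" "y \<in> xy" "g xy = 2"
    and b: "{y, v1} \<in> E" "g {y, v1} = 1" "h {y, v1} \<noteq> 1"
    and e2: "{v1, v2} \<in> E" "g {v1, v2} = 2"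
    and e3: "{v2, v3} \<in> E" "g {v2, v3} = 1"
    and cut: "\<exists>r\<in>{{y, v1}, {v1, v2}, {v2, v3}}. g' r \<notin> {1,2}"
  shows "clean_side E h g' xy y"
proof -
  have same: "g' e = g e" if "e \<in> E" "g' e \<in> {1,2}" for e
    using sh that unfolding restricts_12_def by blast
  have only: "e = e'" if "e \<in> E" "e' \<in> E" "z \<in> e" "z \<in> e'" "g e = g e'" for e e' z
    using proper_edge_coloring_eqD[OF P] that by blast
  show ?thesis
  proof (cases "g' {y, v1} \<in> {1,2}")
    case False
    show ?thesis
    proof (rule clean_side_path0[OF P sh xy], intro ballI impI)
      fix e assume "e \<in> E" "y \<in> e" "g e = 1"
      then have "e = {y, v1}" using only[OF _ b(1) _ insertI1] b(2) by simp
      then show "g' e \<noteq> 1" using False by simp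
    qed
  next
    case b': True
    then have "g' {y, v1} = 1" using same b by simp
    show ?thesis
    proof (cases "g' {v1, v2} \<in> {1,2}")
      case False
      show ?thesis
      proof (rule clean_side_path1[where h = h and y = y and ?v1.0 = v1, OF P sh xy b(1,2) \<open>g' {y, v1} = 1\<close> b(3)], intro ballI impI)
        fix e assume "e \<in> E" "v1 \<in> e" "g e = 2"
        then have "e = {v1, v2}" using only[OF _ e2(1) _ insertI1] e2(2) by simp
        then show "g' e \<noteq> 2" using False by simp
      qed
    next
      case True
      then have "g' {v1, v2} = 2" using same e2 by simp
      have "g' {v2, v3} \<notin> {1,2}" using cut b' True by blast
      show ?thesis
      proof (rule clean_side_path2[where h = h and y = y and ?v1.0 = v1 and ?v2.0 = v2, OF P sh xy b(1,2) \<open>g' {y, v1} = 1\<close> b(3) e2 \<open>g' {v1, v2} = 2\<close>],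
          intro ballI impI)
        fix e assume "e \<in> E" "v2 \<in> e" "g e = 1"
        then have "e = {v2, v3}" using only[OF _ e3(1) _ insertI1] e3(2) by simp
        then show "g' e \<noteq> 1" using \<open>g' {v2, v3} \<notin> {1,2}\<close> by simp
      qed
    qed
  qed
qed

lemma clean_side_or_long_path_beyond:
  assumes SG: "simple_graph V E" and P: "proper_edge_coloring E 5 g"
    and xy: "{x, y} \<in> E" "g {x, y} = 2" and near: "no_h1_near E h g {x, y}"
    and b: "{y, v1} \<in> E" "g {y, v1} = 1" "h {y, v1} \<noteq> 1" and e2: "{v1, v2} \<in> E" "g {v1, v2} = 2"
    and walk2: "walk_steps_in (two_color_edges E g 1 2) 2 {x, y} {v1, v2}"
  obtains "clean_side E h g {x, y} y"
  | v3 e4 where "{v2, v3} \<in> E" "g {v2, v3} = 1" "h {v2, v3} \<noteq> 1" "e4 \<in> E" "v3 \<in> e4" "g e4 = 2"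
proof (cases "\<exists>e\<in>E. v2 \<in> e \<and> g e = 1")
  case False
  then show thesis
    using that(1) clean_side_path2[where h = h, OF P restricts_12_refl xy(1) _ xy(2) b(1,2,2,3) e2 e2(2)] by blast
next
  case True
  then obtain e3 where e3: "e3 \<in> E" "v2 \<in> e3" "g e3 = 1" by blast
  obtain v3 where v3: "e3 = {v2, v3}" using simple_graph_edge_at[OF SG e3(1,2)] by blast
  have "{v1, v2} \<noteq> e3" using e2(2) e3(3) by auto
  then have "walk_steps_in (two_color_edges E g 1 2) 3 {x, y} {v2, v3}"
    using walk_steps_in_snoc[OF walk2 _ _ _ _ e3(2)] e2 e3 v3 by (simp add: two_color_edges_def numeral_3_eq_3)
  then have he3: "h {v2, v3} \<noteq> 1" using no_h1_nearD[OF near order_refl] e3 v3 by simp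
  show thesis
  proof (cases "\<exists>e\<in>E. v3 \<in> e \<and> g e = 2")
    case False
    then show thesis
      using that(1) clean_side_path3[where h = h, OF P restricts_12_refl xy(1) _ xy(2) b(1,2,2,3) e2 e2(2)] e3 v3 he3
      by blast
  next
    case True
    then show thesis using that(2) e3 v3 he3 by blast
  qed
qed

lemma clean_side_or_long_path:
  assumes SG: "simple_graph V E" and P: "proper_edge_coloring E 5 g"
    and xy: "{x, y} \<in> E" "g {x, y} = 2" and near: "no_h1_near E h g {x, y}"
  obtains "clean_side E h g {x, y} y"
  | v1 v2 v3 e4 where "{y, v1} \<in> E" "g {y, v1} = 1" "h {y, v1} \<noteq> 1" "{v1, v2} \<in> E" "g {v1, v2} = 2"
      "{v2, v3} \<in> E" "g {v2, v3} = 1" "h {v2, v3} \<noteq> 1" "e4 \<in> E" "v3 \<in> e4" "g e4 = 2"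
proof (cases "\<exists>e\<in>E. y \<in> e \<and> g e = 1")
  case False
  then show thesis using that(1) clean_side_path0[OF P restricts_12_refl xy(1) _ xy(2)] by blast
next
  case True
  let ?T = "two_color_edges E g 1 2"
  obtain b where b: "b \<in> E" "y \<in> b" "g b = 1" using True by blast
  obtain v1 where v1: "b = {y, v1}" using simple_graph_edge_at[OF SG b(1,2)] by blast
  have walk0: "walk_steps_in ?T 0 {x, y} {x, y}" unfolding walk_steps_in_def by simp
  have "{x, y} \<noteq> b" "{x, y} \<in> ?T" using xy b(3) unfolding two_color_edges_def by auto
  then have walk1: "walk_steps_in ?T 1 {x, y} {y, v1}"
    using walk_steps_in_snoc[OF walk0, of b y] b v1 by (simp add: two_color_edges_def)
  have hb: "h {y, v1} \<noteq> 1" using no_h1_nearD[OF near _ walk1] b v1 by simp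
  show thesis
  proof (cases "\<exists>e\<in>E. v1 \<in> e \<and> g e = 2")
    case False
    then show thesis using that(1) clean_side_path1[OF P restricts_12_refl xy(1) _ xy(2)] b v1 hb by blast
  next
    case True
    then obtain e2 where e2: "e2 \<in> E" "v1 \<in> e2" "g e2 = 2" by blast
    obtain v2 where v2: "e2 = {v1, v2}" using simple_graph_edge_at[OF SG e2(1,2)] by blast
    have "b \<noteq> e2" using b(3) e2(3) by auto
    then have "walk_steps_in ?T 2 {x, y} {v1, v2}"
      using walk_steps_in_snoc[OF walk1 _ _ _ _ e2(2)] b v1 e2 v2 by (simp add: two_color_edges_def numeral_2_eq_2)
    then show thesis
      using clean_side_or_long_path_beyond[OF SG P xy near, of v1 v2] that b v1 hb e2 v2 by blast
  qed
qed

lemma clean_side_of_long_path: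
  assumes SG: "simple_graph V E" and P: "proper_edge_coloring E 5 g"
    and deg: "\<And>z. card {e\<in>E. z \<in> e} \<le> 4"
    and xy: "{x, y} \<in> E" "g {x, y} = 2"
    and b: "{y, v1} \<in> E" "g {y, v1} = 1" "h {y, v1} \<noteq> 1"
    and e2: "{v1, v2} \<in> E" "g {v1, v2} = 2"
    and e3: "{v2, v3} \<in> E" "g {v2, v3} = 1" "h {v2, v3} \<noteq> 1"
    and e4: "e4 \<in> E" "v3 \<in> e4" "g e4 = 2"
  shows "\<exists>g' R. trims E g g' R \<and> {x, y} \<notin> R \<and> (\<forall>e\<in>R. g e = 1 \<longrightarrow> h e \<noteq> 1) \<and>
    clean_side E h g' {x, y} y"
proof -
  let ?R = "{{y, v1}, {v1, v2}, {v2, v3}}"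
  have "y \<noteq> v1" "v1 \<noteq> v2" "v2 \<noteq> v3"
    using simple_graph_card_edge[OF SG] b(1) e2(1) e3(1) by fastforce+
  moreover have "y \<noteq> v2" "v1 \<noteq> v3" using b(2) e2(2) e3(2) by (auto simp: insert_commute)
  moreover have "y \<noteq> v3"
  proof
    assume "y = v3"
    then have "{v2, v3} = {y, v1}"
      using proper_edge_coloring_eqD[OF P e3(1) b(1), of y] b(2) e3(2) by simp
    then show False using \<open>y = v3\<close> \<open>v1 \<noteq> v2\<close> \<open>y \<noteq> v2\<close> by (auto simp: doubleton_eq_iff)
  qed
  ultimately have dist: "y \<noteq> v1" "v1 \<noteq> v2" "v2 \<noteq> v3" "y \<noteq> v2" "v1 \<noteq> v3" "y \<noteq> v3" by blast+
  have "cuts E g ?R"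
    using cuts_three_edge_path[OF SG P deg b(1,2) e2 e3(1,2) xy(1) _ xy(2) e4 dist] by simp
  then obtain g' where g': "trims E g g' ?R" "\<exists>r\<in>?R. g' r \<notin> {1,2}" unfolding cuts_def by blast
  have "restricts_12 E g g'" using g'(1) unfolding trims_def by blast
  then have "clean_side E h g' {x, y} y"
    by (rule clean_side_after_cut[where h = h and y = y and ?v1.0 = v1 and ?v2.0 = v2 and ?v3.0 = v3,
          OF P _ xy(1) _ xy(2) b e2 e3(1,2) g'(2)]) simp
  moreover have "{x, y} \<notin> ?R" using xy(2) b(2) e3(2) dist by (auto simp: doubleton_eq_iff insert_commute)
  moreover have "\<forall>e\<in>?R. g e = 1 \<longrightarrow> h e \<noteq> 1" using b(3) e2(2) e3(3) by auto
  ultimately show ?thesis using g'(1) by blast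
qed

lemma clean_side_reachable:
  assumes SG: "simple_graph V E" and P: "proper_edge_coloring E 5 g"
    and deg: "\<And>z. card {e\<in>E. z \<in> e} \<le> 4"
    and xy: "{x, y} \<in> E" "g {x, y} = 2" and near: "no_h1_near E h g {x, y}"
  shows "\<exists>g' R. trims E g g' R \<and> {x, y} \<notin> R \<and> (\<forall>e\<in>R. g e = 1 \<longrightarrow> h e \<noteq> 1) \<and>
    clean_side E h g' {x, y} y"
proof (cases rule: clean_side_or_long_path[OF SG P xy near])
  case 1
  then show ?thesis using trims_refl by blast
next
  case (2 v1 v2 v3 e4)
  then show ?thesis using clean_side_of_long_path[OF SG P deg xy] by blast
qed

lemma overlap_eq_of_trims:
  assumes "trims E g g' R" "\<forall>e\<in>R. g e = 1 \<longrightarrow> h e \<noteq> 1"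
  shows "color_class E g' 1 \<inter> color_class E h 1 = color_class E g 1 \<inter> color_class E h 1"
proof -
  have "g e = 1" if "e \<in> E" "g' e = 1" for e
    using assms(1) that unfolding trims_def restricts_12_def by fastforce
  moreover have "g' e = 1" if "e \<in> E" "g e = 1" "h e = 1" for e
    using trims_keep[OF assms(1) that(1)] assms(2) that by fastforce
  ultimately show ?thesis unfolding color_class_def by blast
qed

lemma interchange_swap_12:
  "xy \<in> two_color_edges E g 1 2 \<Longrightarrow> interchange E 5 g (swap_on (component E g 1 2 xy) 1 2 g)"
  unfolding interchange_def by (intro exI[of _ 1] exI[of _ 2] exI[of _ xy]) auto

lemma clean_sides_reachable:
  assumes SG: "simple_graph V E" and P: "proper_edge_coloring E 5 f"
    and deg: "\<And>z. card {e\<in>E. z \<in> e} \<le> 4"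
    and xy: "{x, y} \<in> E" "f {x, y} = 2" and near: "no_h1_near E h f {x, y}"
  obtains g where "(interchange E 5)\<^sup>*\<^sup>* f g"
    "color_class E g 1 \<inter> color_class E h 1 = color_class E f 1 \<inter> color_class E h 1"
    "{x, y} \<in> two_color_edges E g 1 2" "g {x, y} = 2"
    "clean_side E h g {x, y} y" "clean_side E h g {x, y} x"
proof -
  have yx: "{y, x} = {x, y}" by (rule insert_commute)
  obtain g1 R1 where g1: "trims E f g1 R1" "{x, y} \<notin> R1" "\<forall>e\<in>R1. f e = 1 \<longrightarrow> h e \<noteq> 1"
      "clean_side E h g1 {x, y} y"
    using clean_side_reachable[OF SG P deg xy near] by blast
  have xy1: "{y, x} \<in> E" "g1 {y, x} = 2" using trims_keep[OF g1(1) xy(1)] xy g1(2) yx by simp_all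
  have "no_h1_near E h g1 {y, x}"
    using no_h1_near_restricts_12[OF near _ xy(1)] g1(1) yx unfolding trims_def by simp
  then obtain g2 R2 where g2: "trims E g1 g2 R2" "{y, x} \<notin> R2" "\<forall>e\<in>R2. g1 e = 1 \<longrightarrow> h e \<noteq> 1"
      "clean_side E h g2 {y, x} x"
    using clean_side_reachable[OF SG trims_proper[OF g1(1) P] deg xy1] by blast
  show thesis
  proof
    show "(interchange E 5)\<^sup>*\<^sup>* f g2" using g1(1) g2(1) unfolding trims_def by fastforce
    show "color_class E g2 1 \<inter> color_class E h 1 = color_class E f 1 \<inter> color_class E h 1"
      using overlap_eq_of_trims[OF g1(1,3)] overlap_eq_of_trims[OF g2(1,3)] by simp
    show "g2 {x, y} = 2" using trims_keep[OF g2(1) xy1(1)] xy1 g2(2) yx by simp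
    then show "{x, y} \<in> two_color_edges E g2 1 2" using xy(1) by (simp add: two_color_edges_def)
    show "clean_side E h g2 {x, y} y"
      using clean_side_restricts_12[OF g1(4)] g2(1) unfolding trims_def by blast
    show "clean_side E h g2 {x, y} x" using g2(4) yx by simp
  qed
qed

lemma swap_12_increases_overlap:
  assumes "finite E" and xy: "{x, y} \<in> two_color_edges E g 1 2" "g {x, y} = 2" "h {x, y} = 1"
    and "clean_side E h g {x, y} y" "clean_side E h g {x, y} x"
  shows "card (color_class E (swap_on (component E g 1 2 {x, y}) 1 2 g) 1 \<inter> color_class E h 1)
    > card (color_class E g 1 \<inter> color_class E h 1)"
proof (rule card_overlap_increases_by_swap[where h = h, OF assms(1) xy])
  obtain Ay Ax where "component E g 1 2 {x, y} \<subseteq> insert {x, y} (Ay \<union> Ax)"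
      "\<forall>e\<in>Ay \<union> Ax. g e = 1 \<longrightarrow> h e \<noteq> 1"
    using component_within_clean_sides[OF assms(5,6) xy(1)] by blast
  then show "\<forall>e\<in>component E g 1 2 {x, y}. g e = 1 \<longrightarrow> h e \<noteq> 1" using xy(2) by auto
qed

theorem lemma2p3:
  fixes V :: "'a set" and E :: "'a set set" and h f :: "'a set \<Rightarrow> nat"
    and x y :: 'a
  assumes "simple_graph V E"
    and "chromatic_index E = 4" and "max_degree V E = 4"
    and "proper_edge_coloring E 4 h"
    and "proper_edge_coloring E 5 f"
    and "{x, y} \<in> E" and "f {x, y} = 2" and "h {x, y} = 1"
    and "\<not> (\<exists>e. dist_le_on (component E f 1 2 {x, y}) {x, y} e 2 \<and> f e = 1 \<and> h e = 1)"
  shows "\<exists>f'. proper_edge_coloring E 5 f' \<and> (interchange E 5)\<^sup>*\<^sup>* f f' \<and>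
           card (color_class E f' 1 \<inter> color_class E h 1) > card (color_class E f 1 \<inter> color_class E h 1)"
proof -
  have deg: "\<And>z. card {e\<in>E. z \<in> e} \<le> 4" using card_edges_at_le_max_degree[OF assms(1)] assms(3) by simp
  have "no_h1_near E h f {x, y}"
    using no_h1_near_of_dist[OF _ assms(9)] assms(6,7) by (simp add: two_color_edges_def)
  then obtain g where g: "(interchange E 5)\<^sup>*\<^sup>* f g"
      "color_class E g 1 \<inter> color_class E h 1 = color_class E f 1 \<inter> color_class E h 1"
      "{x, y} \<in> two_color_edges E g 1 2" "g {x, y} = 2" "clean_side E h g {x, y} y" "clean_side E h g {x, y} x"
    using clean_sides_reachable[OF assms(1,5) deg assms(6,7)] by blast
  let ?f' = "swap_on (component E g 1 2 {x, y}) 1 2 g"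
  have "(interchange E 5)\<^sup>*\<^sup>* f ?f'" using g(1) interchange_swap_12[OF g(3)] by (meson rtranclp.rtrancl_into_rtrancl)
  moreover have "card (color_class E ?f' 1 \<inter> color_class E h 1) > card (color_class E g 1 \<inter> color_class E h 1)"
    using swap_12_increases_overlap[OF simple_graph_finite_edges[OF assms(1)] g(3,4) assms(8) g(5,6)] .
  ultimately show ?thesis using g(2) interchanges_proper[OF _ assms(5)] by auto
qed

end
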